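(* An $L$-layer linear attention model with $H$ heads, dimension $d$ and precision $p$ cannot solve the permutation composition task $\mathsf{PerCom}$ on $[n]$ whenever $LHd(d+1)p<\log(n!)$ (note $\log(n!)=\Theta(n\log n)$). On the other hand, a single-layer full attention Transformer solves $\mathsf{PerCom}$ with $Hdp=O(\mathrm{poly}\log n)$. The same lower bound holds for linear attention with chain-of-thought.
   Context: Permutation composition $\mathsf{PerCom}(\sigma,\tau)$: the input consists of two bijections $\sigma,\tau:[n]\to[n]$, given as $n$ tokens $\sigma(1),\dots,\sigma(n)$ followed by $n$ tokens $\tau(1),\dots,\tau(n)$. The required output is the sequence $\sigma(\tau(1)),\dots,\sigma(\tau(n))$. Linear attention layer: head outputs $y_i=\sum_{j\le i}\alpha_{i,j}Vx_j$ with $\alpha_{i,j}=\varphi(Qx_i)^\top\varphi(Kx_j)/\sum_{j'\le i}\varphi(Qx_i)^\top\varphi(Kx_{j'})$ for an arbitrary $\varphi:\mathbb{R}^d\to\mathbb{R}^d$. Here $Q,K,V\in\mathbb{R}^{d\times dH}$ have $p$-bit entries, the $H$ heads are concatenated, and each layer is followed by an arbitrary position-wise MLP map. Full attention instead uses softmax weights $\alpha_{i,j}\propto\exp(\langle Qx_i,Kx_j\rangle)$. All quantities use $p$-bit precision. With chain-of-thought, the model autoregressively generates additional tokens after the input (each appended as a new position), and the answer is read from them. *)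

theory Defs
  imports Complex_Main
begin

text \<open>A p-bit number format is modelled by a rounding map whose range has at most 2^p values.\<close>
definition pbit :: "nat \<Rightarrow> (real \<Rightarrow> real) \<Rightarrow> bool" where
  "pbit p rnd \<longleftrightarrow> finite (range rnd) \<and> card (range rnd) \<le> 2 ^ p"

text \<open>Concrete signed fixed-point format with p bits (used for the upper bound).\<close>
definition fxp :: "nat \<Rightarrow> real \<Rightarrow> real" where
  "fxp p x = (let B = (2::int) ^ (p - 1) - 1;
                  k = max (- B) (min B (round (x * 2 ^ (p div 2))))
              in of_int k / 2 ^ (p div 2))"

section \<open>Vectors and matrices (finite-support functions on nat)\<close>

definition rvec :: "(real \<Rightarrow> real) \<Rightarrow> nat \<Rightarrow> (nat \<Rightarrow> real) \<Rightarrow> nat \<Rightarrow> real" where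
  "rvec rnd m v = (\<lambda>i. if i < m then rnd (v i) else 0)"

definition mv :: "nat \<Rightarrow> nat \<Rightarrow> (nat \<Rightarrow> nat \<Rightarrow> real) \<Rightarrow> (nat \<Rightarrow> real) \<Rightarrow> nat \<Rightarrow> real" where
  "mv r c A x = (\<lambda>a. if a < r then (\<Sum>b<c. A a b * x b) else 0)"

definition dotp :: "nat \<Rightarrow> (nat \<Rightarrow> real) \<Rightarrow> (nat \<Rightarrow> real) \<Rightarrow> real" where
  "dotp d u v = (\<Sum>a<d. u a * v a)"

text \<open>One layer: per head h, matrices Q h, K h, V h (d x dH, entries rounded to p bits),
  a feature map phi h (used only by linear attention), and an arbitrary position-wise MLP
  taking the residual stream vector and the concatenated head outputs.\<close>
record layer =
  Qw :: "nat \<Rightarrow> nat \<Rightarrow> nat \<Rightarrow> real"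
  Kw :: "nat \<Rightarrow> nat \<Rightarrow> nat \<Rightarrow> real"
  Vw :: "nat \<Rightarrow> nat \<Rightarrow> nat \<Rightarrow> real"
  phi :: "nat \<Rightarrow> (nat \<Rightarrow> real) \<Rightarrow> nat \<Rightarrow> real"
  mlp :: "(nat \<Rightarrow> real) \<Rightarrow> (nat \<Rightarrow> real) \<Rightarrow> nat \<Rightarrow> real"

text \<open>A model: token/position embedding, list of layers (L = length), output decoder.\<close>
record model =
  emb :: "nat \<Rightarrow> nat \<Rightarrow> nat \<Rightarrow> real"
  layers :: "layer list"
  dec :: "(nat \<Rightarrow> real) \<Rightarrow> nat"

datatype attn_kind = Linear | Full

definition proj :: "(real \<Rightarrow> real) \<Rightarrow> nat \<Rightarrow> nat \<Rightarrow> (nat \<Rightarrow> nat \<Rightarrow> real) \<Rightarrow> (nat \<Rightarrow> real) \<Rightarrow> nat \<Rightarrow> real" where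
  "proj rnd d H W x = rvec rnd d (mv d (d * H) (\<lambda>a b. rnd (W a b)) x)"

text \<open>Linear attention is computed with its p-bit prefix-sum state
  S_i = sum_{j<=i} phi(K x_j) (V x_j)^T,  z_i = sum_{j<=i} phi(K x_j).\<close>
definition lin_step :: "(real \<Rightarrow> real) \<Rightarrow> nat \<Rightarrow> (nat \<Rightarrow> real) \<Rightarrow> (nat \<Rightarrow> real)
    \<Rightarrow> (nat \<Rightarrow> nat \<Rightarrow> real) \<times> (nat \<Rightarrow> real) \<Rightarrow> (nat \<Rightarrow> nat \<Rightarrow> real) \<times> (nat \<Rightarrow> real)" where
  "lin_step rnd d fk v st =
     ((\<lambda>a b. if a < d \<and> b < d then rnd (fst st a b + fk a * v b) else 0),
      (\<lambda>a. if a < d then rnd (snd st a + fk a) else 0))"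

definition lin_state :: "(real \<Rightarrow> real) \<Rightarrow> nat \<Rightarrow> nat \<Rightarrow> layer \<Rightarrow> nat \<Rightarrow> (nat \<Rightarrow> real) list
    \<Rightarrow> (nat \<Rightarrow> nat \<Rightarrow> real) \<times> (nat \<Rightarrow> real)" where
  "lin_state rnd d H l h xs =
     fold (\<lambda>x st. lin_step rnd d (rvec rnd d (phi l h (proj rnd d H (Kw l h) x)))
                            (proj rnd d H (Vw l h) x) st)
          xs ((\<lambda>a b. 0), (\<lambda>a. 0))"

definition head_out :: "attn_kind \<Rightarrow> (real \<Rightarrow> real) \<Rightarrow> nat \<Rightarrow> nat \<Rightarrow> layer \<Rightarrow> nat
    \<Rightarrow> (nat \<Rightarrow> real) list \<Rightarrow> nat \<Rightarrow> nat \<Rightarrow> real" where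
  "head_out kind rnd d H l h xs i =
    (case kind of
      Linear \<Rightarrow>
        (let st = lin_state rnd d H l h (take (Suc i) xs);
             fq = rvec rnd d (phi l h (proj rnd d H (Qw l h) (xs ! i)));
             den = rnd (dotp d fq (snd st))
         in rvec rnd d (\<lambda>b. (\<Sum>a<d. fq a * fst st a b) / den))
    | Full \<Rightarrow>
        (let q = proj rnd d H (Qw l h) (xs ! i);
             w = (\<lambda>j. exp (dotp d q (proj rnd d H (Kw l h) (xs ! j))))
         in rvec rnd d (\<lambda>b. (\<Sum>j\<le>i. w j * proj rnd d H (Vw l h) (xs ! j) b) / (\<Sum>j\<le>i. w j))))"

definition concat_heads :: "nat \<Rightarrow> nat \<Rightarrow> (nat \<Rightarrow> nat \<Rightarrow> real) \<Rightarrow> nat \<Rightarrow> real" where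
  "concat_heads d H ys = (\<lambda>c. if c < d * H then ys (c div d) (c mod d) else 0)"

definition apply_layer :: "attn_kind \<Rightarrow> (real \<Rightarrow> real) \<Rightarrow> nat \<Rightarrow> nat \<Rightarrow> layer
    \<Rightarrow> (nat \<Rightarrow> real) list \<Rightarrow> (nat \<Rightarrow> real) list" where
  "apply_layer kind rnd d H l xs =
     map (\<lambda>i. rvec rnd (d * H) (mlp l (xs ! i) (concat_heads d H (\<lambda>h. head_out kind rnd d H l h xs i))))
         [0..<length xs]"

definition hidden :: "attn_kind \<Rightarrow> (real \<Rightarrow> real) \<Rightarrow> nat \<Rightarrow> nat \<Rightarrow> model \<Rightarrow> nat list
    \<Rightarrow> (nat \<Rightarrow> real) list" where
  "hidden kind rnd d H M toks =
     fold (apply_layer kind rnd d H) (layers M)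
          (map (\<lambda>i. rvec rnd (d * H) (emb M (toks ! i) i)) [0..<length toks])"

text \<open>Output token at (0-based) position i.\<close>
definition model_out :: "attn_kind \<Rightarrow> (real \<Rightarrow> real) \<Rightarrow> nat \<Rightarrow> nat \<Rightarrow> model \<Rightarrow> nat list \<Rightarrow> nat \<Rightarrow> nat" where
  "model_out kind rnd d H M toks i = dec M (hidden kind rnd d H M toks ! i)"

definition is_perm :: "nat \<Rightarrow> (nat \<Rightarrow> nat) \<Rightarrow> bool" where
  "is_perm n \<sigma> \<longleftrightarrow> bij_betw \<sigma> {1..n} {1..n}"

definition percom_input :: "nat \<Rightarrow> (nat \<Rightarrow> nat) \<Rightarrow> (nat \<Rightarrow> nat) \<Rightarrow> nat list" where
  "percom_input n \<sigma> \<tau> = map \<sigma> [1..<Suc n] @ map \<tau> [1..<Suc n]"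

text \<open>Without chain-of-thought: the output at the position of token tau(i) is sigma(tau(i)).\<close>
definition solves :: "attn_kind \<Rightarrow> (real \<Rightarrow> real) \<Rightarrow> nat \<Rightarrow> nat \<Rightarrow> nat \<Rightarrow> model \<Rightarrow> bool" where
  "solves kind rnd d H n M \<longleftrightarrow>
     (\<forall>\<sigma> \<tau>. is_perm n \<sigma> \<longrightarrow> is_perm n \<tau> \<longrightarrow>
        (\<forall>i\<in>{1..n}. model_out kind rnd d H M (percom_input n \<sigma> \<tau>) (n + i - 1) = \<sigma> (\<tau> i)))"

text \<open>Chain-of-thought: autoregressive generation of t further tokens.\<close>
primrec cot_seq :: "attn_kind \<Rightarrow> (real \<Rightarrow> real) \<Rightarrow> nat \<Rightarrow> nat \<Rightarrow> model \<Rightarrow> nat list \<Rightarrow> nat \<Rightarrow> nat list" where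
  "cot_seq kind rnd d H M toks 0 = toks"
| "cot_seq kind rnd d H M toks (Suc t) =
     (let s = cot_seq kind rnd d H M toks t in s @ [model_out kind rnd d H M s (length s - 1)])"

text \<open>Solving with CoT: for some CoT length T and fixed answer positions r(i) among the
  T generated tokens, the r(i)-th generated token is sigma(tau(i)).\<close>
definition solves_cot :: "attn_kind \<Rightarrow> (real \<Rightarrow> real) \<Rightarrow> nat \<Rightarrow> nat \<Rightarrow> nat \<Rightarrow> model \<Rightarrow> bool" where
  "solves_cot kind rnd d H n M \<longleftrightarrow>
     (\<exists>T r. \<forall>\<sigma> \<tau>. is_perm n \<sigma> \<longrightarrow> is_perm n \<tau> \<longrightarrow>
        (\<forall>i\<in>{1..n}. r i < T \<and>
           cot_seq kind rnd d H M (percom_input n \<sigma> \<tau>) T ! (2 * n + r i) = \<sigma> (\<tau> i)))"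

end

theory Submission
  imports Defs "HOL-Library.FuncSet" "HOL-Library.Log_Nat" "HOL-Combinatorics.Permutations"
begin

(* A linear-attention head is a recurrence: it carries the prefix sums
   S = sum_j phi(K x_j) (V x_j)^T and z = sum_j phi(K x_j), which the p-bit format rounds to
   d(d+1) numbers from a set of at most 2^p values.  As attention is causal, the outputs at the
   positions of tau depend on sigma(1), ..., sigma(n) only through these L H states, and there
   are at most 2^(L H d (d+1) p) < n! of them.  So two different permutations sigma, sigma' leave
   the same states and the model gives the same answers on the inputs (sigma, id) and
   (sigma', id), whose correct answers differ; by induction the same holds for every token
   generated by chain of thought.

   For the upper bound a single softmax head of dimension 4 suffices: at a position holding
   tau(i) = t the score of position j < n is Lambda (t^2 - (t - (j+1))^2), which is maximal at
   j + 1 = t with margin Lambda = 8 n^2.  The attention output is therefore within 1/4 of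
   sigma(t), and the MLP rounds it.  All weights and intermediate values are integers of size
   O(n^3), exact in fixed point with O(log n) bits. *)

section \<open>Linear attention sees a prefix only through its state\<close>

definition embed_tokens :: "(real \<Rightarrow> real) \<Rightarrow> nat \<Rightarrow> nat \<Rightarrow> model \<Rightarrow> nat list \<Rightarrow> (nat \<Rightarrow> real) list" where
  "embed_tokens rnd d H M toks = map (\<lambda>i. rvec rnd (d * H) (emb M (toks ! i) i)) [0..<length toks]"

lemma length_embed_tokens [simp]: "length (embed_tokens rnd d H M toks) = length toks"
  by (simp add: embed_tokens_def)

lemma take_embed_tokens: "take m (embed_tokens rnd d H M toks) = embed_tokens rnd d H M (take m toks)"
  unfolding embed_tokens_def by (rule nth_equalityI) auto

lemma hidden_eq_fold_embed_tokens:
  "hidden kind rnd d H M toks = fold (apply_layer kind rnd d H) (layers M) (embed_tokens rnd d H M toks)"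
  by (simp add: hidden_def embed_tokens_def)

lemma length_apply_layer [simp]: "length (apply_layer kind rnd d H l xs) = length xs"
  by (simp add: apply_layer_def)

lemma length_fold_apply_layer [simp]: "length (fold (apply_layer kind rnd d H) ls xs) = length xs"
  by (induction ls arbitrary: xs) auto

lemma length_hidden [simp]: "length (hidden kind rnd d H M toks) = length toks"
  by (simp add: hidden_eq_fold_embed_tokens)

lemma nth_eq_if_drop_eq:
  assumes "drop n xs = drop n ys" "n \<le> j" "j < length xs"
  shows "xs ! j = ys ! j"
proof -
  have "n \<le> length ys"
    using arg_cong[OF assms(1), of length] assms(2,3) by simp
  then show ?thesis
    using assms nth_drop[of n xs "j - n"] nth_drop[of n ys "j - n"] by simp
qed

lemma head_out_Linear_take:
  assumes "i < m"
  shows "head_out Linear rnd d H l h (take m xs) i = head_out Linear rnd d H l h xs i"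
proof -
  have "take (Suc i) (take m xs) = take (Suc i) xs" using assms by (simp add: min_def)
  moreover have "take m xs ! i = xs ! i"
    using assms by (cases "length xs \<le> m") simp_all
  ultimately show ?thesis unfolding head_out_def by simp
qed

lemma take_apply_layer_Linear:
  "take m (apply_layer Linear rnd d H l xs) = apply_layer Linear rnd d H l (take m xs)"
  unfolding apply_layer_def by (rule nth_equalityI) (auto simp: head_out_Linear_take)

lemma take_fold_apply_layer_Linear:
  "take m (fold (apply_layer Linear rnd d H) ls xs) = fold (apply_layer Linear rnd d H) ls (take m xs)"
  by (induction ls arbitrary: xs) (auto simp: take_apply_layer_Linear)

lemma head_out_Linear_eq_if_prefix_state_eq:
  assumes "n \<le> i" "i < length xs" "drop n xs = drop n ys"
    and "lin_state rnd d H l h (take n xs) = lin_state rnd d H l h (take n ys)"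
  shows "head_out Linear rnd d H l h xs i = head_out Linear rnd d H l h ys i"
proof -
  have "take (Suc i) xs = take n xs @ take (Suc i - n) (drop n xs)"
    and "take (Suc i) ys = take n ys @ take (Suc i - n) (drop n ys)"
    using take_add[of n "Suc i - n"] assms(1) by simp_all
  moreover have "xs ! i = ys ! i"
    using assms(1-3) by (rule nth_eq_if_drop_eq[rotated])
  ultimately show ?thesis
    unfolding head_out_def using assms(3,4) by (simp add: lin_state_def)
qed

lemma concat_heads_cong:
  assumes "\<And>h. h < H \<Longrightarrow> f h = g h"
  shows "concat_heads d H f = concat_heads d H g"
  using assms less_mult_imp_div_less[of _ H d] by (auto simp: concat_heads_def mult.commute)

lemma drop_apply_layer_Linear_eq:
  assumes "length xs = length ys" "drop n xs = drop n ys"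
    and "\<And>h. h < H \<Longrightarrow> lin_state rnd d H l h (take n xs) = lin_state rnd d H l h (take n ys)"
  shows "drop n (apply_layer Linear rnd d H l xs) = drop n (apply_layer Linear rnd d H l ys)"
proof (rule nth_equalityI)
  fix j
  assume "j < length (drop n (apply_layer Linear rnd d H l xs))"
  then have j: "n \<le> n + j" "n + j < length xs"
    by simp_all
  then have "xs ! (n + j) = ys ! (n + j)"
    using assms(2) by (rule nth_eq_if_drop_eq[rotated])
  moreover have "concat_heads d H (\<lambda>h. head_out Linear rnd d H l h xs (n + j))
      = concat_heads d H (\<lambda>h. head_out Linear rnd d H l h ys (n + j))"
    using head_out_Linear_eq_if_prefix_state_eq[OF j assms(2,3)] by (rule concat_heads_cong)
  ultimately show "drop n (apply_layer Linear rnd d H l xs) ! j = drop n (apply_layer Linear rnd d H l ys) ! j"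
    using j assms(1) by (simp add: apply_layer_def)
qed (use assms(1) in simp)

lemma drop_fold_apply_layer_Linear_eq:
  assumes "length xs = length ys" "drop n xs = drop n ys"
    and "\<And>k h. k < length ls \<Longrightarrow> h < H \<Longrightarrow>
      lin_state rnd d H (ls ! k) h (fold (apply_layer Linear rnd d H) (take k ls) (take n xs))
    = lin_state rnd d H (ls ! k) h (fold (apply_layer Linear rnd d H) (take k ls) (take n ys))"
  shows "drop n (fold (apply_layer Linear rnd d H) ls xs) = drop n (fold (apply_layer Linear rnd d H) ls ys)"
  using assms
proof (induction ls arbitrary: xs ys)
  case (Cons l ls)
  have "drop n (apply_layer Linear rnd d H l xs) = drop n (apply_layer Linear rnd d H l ys)"
    using Cons.prems(1,2) Cons.prems(3)[of 0] by (intro drop_apply_layer_Linear_eq) auto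
  then show ?case
    using Cons.prems(1) Cons.prems(3)[of "Suc k" for k]
    by (auto intro!: Cons.IH simp: take_apply_layer_Linear)
qed simp

definition layer_input :: "(real \<Rightarrow> real) \<Rightarrow> nat \<Rightarrow> nat \<Rightarrow> model \<Rightarrow> nat \<Rightarrow> nat list \<Rightarrow> (nat \<Rightarrow> real) list" where
  "layer_input rnd d H M k toks =
     fold (apply_layer Linear rnd d H) (take k (layers M)) (embed_tokens rnd d H M toks)"

definition lin_memory :: "(real \<Rightarrow> real) \<Rightarrow> nat \<Rightarrow> nat \<Rightarrow> model \<Rightarrow> nat list
    \<Rightarrow> nat \<times> nat \<Rightarrow> (nat \<Rightarrow> nat \<Rightarrow> real) \<times> (nat \<Rightarrow> real)" where
  "lin_memory rnd d H M toks = (\<lambda>(k, h) \<in> {..<length (layers M)} \<times> {..<H}.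
     lin_state rnd d H (layers M ! k) h (layer_input rnd d H M k toks))"

lemma drop_hidden_Linear_eq:
  assumes "length toks = length toks'" "drop n toks = drop n toks'"
    and "lin_memory rnd d H M (take n toks) = lin_memory rnd d H M (take n toks')"
  shows "drop n (hidden Linear rnd d H M toks) = drop n (hidden Linear rnd d H M toks')"
  unfolding hidden_eq_fold_embed_tokens
proof (rule drop_fold_apply_layer_Linear_eq)
  show "drop n (embed_tokens rnd d H M toks) = drop n (embed_tokens rnd d H M toks')"
    using assms(1,2) nth_eq_if_drop_eq[OF assms(2)]
    by (intro nth_equalityI) (auto simp: embed_tokens_def)
  fix k h
  assume "k < length (layers M)" "h < H"
  then show "lin_state rnd d H (layers M ! k) h
        (fold (apply_layer Linear rnd d H) (take k (layers M)) (take n (embed_tokens rnd d H M toks)))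
      = lin_state rnd d H (layers M ! k) h
        (fold (apply_layer Linear rnd d H) (take k (layers M)) (take n (embed_tokens rnd d H M toks')))"
    using fun_cong[OF assms(3), of "(k, h)"]
    by (simp add: lin_memory_def layer_input_def take_embed_tokens)
qed (use assms(1) in simp)

lemma length_cot_seq [simp]: "length (cot_seq kind rnd d H M toks t) = length toks + t"
  by (induction t) (simp_all add: Let_def)

lemma take_cot_seq: "m \<le> length toks \<Longrightarrow> take m (cot_seq kind rnd d H M toks t) = take m toks"
  by (induction t) (simp_all add: Let_def)

lemma drop_cot_seq_Linear_eq:
  assumes "length toks = length toks'" "n < length toks" "drop n toks = drop n toks'"
    and "lin_memory rnd d H M (take n toks) = lin_memory rnd d H M (take n toks')"
  shows "drop n (cot_seq Linear rnd d H M toks t) = drop n (cot_seq Linear rnd d H M toks' t)"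
proof (induction t)
  case (Suc t)
  define s where "s = cot_seq Linear rnd d H M toks t"
  define s' where "s' = cot_seq Linear rnd d H M toks' t"
  have "drop n (hidden Linear rnd d H M s) = drop n (hidden Linear rnd d H M s')"
    using Suc.IH assms by (intro drop_hidden_Linear_eq) (simp_all add: s_def s'_def take_cot_seq)
  then have "model_out Linear rnd d H M s (length s - 1) = model_out Linear rnd d H M s' (length s' - 1)"
    using assms(1,2) unfolding model_out_def
    by (subst nth_eq_if_drop_eq[where n = n]) (simp_all add: s_def s'_def)
  then show ?case
    using Suc.IH assms(1,2) by (simp add: s_def s'_def Let_def)
qed (use assms(3) in simp)

section \<open>Counting states: the lower bound\<close>

definition rounded_state :: "real set \<Rightarrow> nat \<Rightarrow> (nat \<Rightarrow> nat \<Rightarrow> real) \<times> (nat \<Rightarrow> real) \<Rightarrow> bool" where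
  "rounded_state R d st \<longleftrightarrow>
     (\<forall>a b. fst st a b \<in> (if a < d \<and> b < d then R else {0})) \<and>
     (\<forall>a. snd st a \<in> (if a < d then R else {0}))"

lemma rounded_state_lin_state:
  assumes "xs \<noteq> []"
  shows "rounded_state (range rnd) d (lin_state rnd d H l h xs)"
proof -
  have "rounded_state (range rnd) d (fold f xs st)"
    if "\<And>x st. rounded_state (range rnd) d (f x st)" for f st
    using assms that by (induction xs arbitrary: st rule: list_nonempty_induct) auto
  then show ?thesis
    unfolding lin_state_def by (simp add: rounded_state_def lin_step_def)
qed

lemma card_rounded_states_le:
  assumes "finite R"
  shows "finite {st. rounded_state R d st}" and "card {st. rounded_state R d st} \<le> card R ^ (d * (d + 1))"
proof -
  define D where "D = {..<d} \<times> {..<Suc d}"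
  define decode :: "(nat \<times> nat \<Rightarrow> real) \<Rightarrow> (nat \<Rightarrow> nat \<Rightarrow> real) \<times> (nat \<Rightarrow> real)" where
    "decode f = ((\<lambda>a b. if a < d \<and> b < d then f (a, b) else 0), (\<lambda>a. if a < d then f (a, d) else 0))" for f
  have sub: "{st. rounded_state R d st} \<subseteq> decode ` (D \<rightarrow>\<^sub>E R)"
  proof
    fix st
    assume st: "st \<in> {st. rounded_state R d st}"
    let ?f = "\<lambda>(a, b) \<in> D. if b < d then fst st a b else snd st a"
    have "st = decode ?f"
      using st by (auto simp: rounded_state_def decode_def D_def prod_eq_iff fun_eq_iff split: if_splits)
    moreover have "?f \<in> D \<rightarrow>\<^sub>E R"
      using st by (auto simp: rounded_state_def D_def split: if_splits)
    ultimately show "st \<in> decode ` (D \<rightarrow>\<^sub>E R)"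
      by blast
  qed
  have fin: "finite (D \<rightarrow>\<^sub>E R)"
    using assms by (simp add: D_def finite_PiE)
  then show "finite {st. rounded_state R d st}"
    using sub by (meson finite_imageI finite_subset)
  have "card {st. rounded_state R d st} \<le> card (decode ` (D \<rightarrow>\<^sub>E R))"
    using fin sub by (intro card_mono) simp_all
  also have "\<dots> \<le> card (D \<rightarrow>\<^sub>E R)"
    using fin by (rule card_image_le)
  also have "\<dots> = card R ^ (d * (d + 1))"
    by (simp add: D_def card_PiE card_cartesian_product)
  finally show "card {st. rounded_state R d st} \<le> card R ^ (d * (d + 1))" .
qed

definition lin_memories :: "(real \<Rightarrow> real) \<Rightarrow> nat \<Rightarrow> nat \<Rightarrow> model
    \<Rightarrow> (nat \<times> nat \<Rightarrow> (nat \<Rightarrow> nat \<Rightarrow> real) \<times> (nat \<Rightarrow> real)) set" where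
  "lin_memories rnd d H M =
     ({..<length (layers M)} \<times> {..<H}) \<rightarrow>\<^sub>E {st. rounded_state (range rnd) d st}"

lemma lin_memory_in_lin_memories:
  assumes "toks \<noteq> []"
  shows "lin_memory rnd d H M toks \<in> lin_memories rnd d H M"
  using assms
  by (auto simp: lin_memory_def lin_memories_def layer_input_def rounded_state_lin_state
      simp flip: length_greater_0_conv)

lemma finite_lin_memories:
  assumes "pbit p rnd"
  shows "finite (lin_memories rnd d H M)"
  using assms card_rounded_states_le(1)[of "range rnd" d]
  by (simp add: pbit_def lin_memories_def finite_PiE)

lemma card_lin_memories_le:
  assumes "pbit p rnd"
  shows "card (lin_memories rnd d H M) \<le> 2 ^ (length (layers M) * H * d * (d + 1) * p)"
proof -
  let ?S = "{st. rounded_state (range rnd) d st}"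
  have fin: "finite (range rnd)" and card: "card (range rnd) \<le> 2 ^ p"
    using assms by (simp_all add: pbit_def)
  have "card (lin_memories rnd d H M) = card ?S ^ (length (layers M) * H)"
    by (simp add: lin_memories_def card_PiE card_cartesian_product)
  also have "\<dots> \<le> (card (range rnd) ^ (d * (d + 1))) ^ (length (layers M) * H)"
    using card_rounded_states_le(2)[OF fin] by (rule power_mono) simp
  also have "\<dots> \<le> ((2 ^ p) ^ (d * (d + 1))) ^ (length (layers M) * H)"
    using card by (intro power_mono) simp_all
  also have "\<dots> = 2 ^ (length (layers M) * H * d * (d + 1) * p)"
    by (simp flip: power_mult add: algebra_simps)
  finally show ?thesis .
qed

lemma lin_memory_collision:
  assumes "pbit p rnd" "real (length (layers M) * H * d * (d + 1) * p) < log 2 (fact n)"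
  obtains \<sigma> \<sigma>' where "\<sigma> permutes {1..n}" "\<sigma>' permutes {1..n}" "\<sigma> \<noteq> \<sigma>'"
    "lin_memory rnd d H M (map \<sigma> [1..<Suc n]) = lin_memory rnd d H M (map \<sigma>' [1..<Suc n])"
proof -
  let ?N = "length (layers M) * H * d * (d + 1) * p"
  let ?P = "{\<sigma>. \<sigma> permutes {1..n}}"
  let ?mem = "\<lambda>\<sigma>. lin_memory rnd d H M (map \<sigma> [1..<Suc n])"
  have "n \<noteq> 0"
  proof
    assume "n = 0"
    then show False
      using assms(2) by (simp del: of_nat_mult)
  qed
  then have mem: "?mem ` ?P \<subseteq> lin_memories rnd d H M"
    by (intro image_subsetI lin_memory_in_lin_memories) simp
  have "real (2 ^ ?N) < real (fact n)"
    using assms(2) less_log_iff[of 2 "fact n" "real ?N"] by (simp add: powr_realpow del: of_nat_mult)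
  then have less: "2 ^ ?N < card ?P"
    by (simp only: of_nat_less_iff card_permutations card_atLeastAtMost finite_atLeastAtMost diff_Suc_1)
  have "\<not> inj_on ?mem ?P"
  proof
    assume "inj_on ?mem ?P"
    then have "card ?P \<le> card (lin_memories rnd d H M)"
      using mem finite_lin_memories[OF assms(1)] by (rule card_inj_on_le)
    then show False
      using less card_lin_memories_le[OF assms(1), of d H M] by linarith
  qed
  then show ?thesis
    using that unfolding inj_on_def by blast
qed

lemma length_percom_input [simp]: "length (percom_input n \<sigma> \<tau>) = 2 * n"
  and take_percom_input [simp]: "take n (percom_input n \<sigma> \<tau>) = map \<sigma> [1..<Suc n]"
  and drop_percom_input [simp]: "drop n (percom_input n \<sigma> \<tau>) = map \<tau> [1..<Suc n]"
  by (simp_all add: percom_input_def)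

lemma is_perm_if_permutes: "\<sigma> permutes {1..n} \<Longrightarrow> is_perm n \<sigma>"
  by (simp add: is_perm_def permutes_imp_bij)

lemma permutes_eqI:
  assumes "\<sigma> permutes S" "\<sigma>' permutes S" "\<And>x. x \<in> S \<Longrightarrow> \<sigma> x = \<sigma>' x"
  shows "\<sigma> = \<sigma>'"
proof
  fix x
  show "\<sigma> x = \<sigma>' x"
    using assms by (cases "x \<in> S") (simp_all add: permutes_not_in)
qed

text \<open>Feeding \<open>\<tau> = id\<close>, a solver has to read \<open>\<sigma>\<close> back from its memory of the first n tokens.\<close>

lemma solves_Linear_lin_memory_eqD:
  assumes "solves Linear rnd d H n M" "\<sigma> permutes {1..n}" "\<sigma>' permutes {1..n}"
    and "lin_memory rnd d H M (map \<sigma> [1..<Suc n]) = lin_memory rnd d H M (map \<sigma>' [1..<Suc n])"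
  shows "\<sigma> = \<sigma>'"
proof (rule permutes_eqI[OF assms(2,3)])
  fix i
  assume i: "i \<in> {1..n}"
  have "drop n (hidden Linear rnd d H M (percom_input n \<sigma> id))
      = drop n (hidden Linear rnd d H M (percom_input n \<sigma>' id))"
    using assms(4) by (intro drop_hidden_Linear_eq) simp_all
  then have "model_out Linear rnd d H M (percom_input n \<sigma> id) (n + i - 1)
      = model_out Linear rnd d H M (percom_input n \<sigma>' id) (n + i - 1)"
    unfolding model_out_def using i by (subst nth_eq_if_drop_eq[where n = n]) auto
  then show "\<sigma> i = \<sigma>' i"
    using assms(1) i is_perm_if_permutes[OF assms(2)] is_perm_if_permutes[OF assms(3)]
      is_perm_if_permutes[OF permutes_id]
    unfolding solves_def by (metis id_apply)
qed

lemma solves_cot_Linear_lin_memory_eqD: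
  assumes "solves_cot Linear rnd d H n M" "\<sigma> permutes {1..n}" "\<sigma>' permutes {1..n}"
    and "lin_memory rnd d H M (map \<sigma> [1..<Suc n]) = lin_memory rnd d H M (map \<sigma>' [1..<Suc n])"
  shows "\<sigma> = \<sigma>'"
proof -
  obtain T r where sol: "\<And>\<sigma> \<tau> i. is_perm n \<sigma> \<Longrightarrow> is_perm n \<tau> \<Longrightarrow> i \<in> {1..n} \<Longrightarrow>
      r i < T \<and> cot_seq Linear rnd d H M (percom_input n \<sigma> \<tau>) T ! (2 * n + r i) = \<sigma> (\<tau> i)"
    using assms(1) unfolding solves_cot_def by blast
  show ?thesis
  proof (rule permutes_eqI[OF assms(2,3)])
    fix i
    assume i: "i \<in> {1..n}"
    have "drop n (cot_seq Linear rnd d H M (percom_input n \<sigma> id) T)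
        = drop n (cot_seq Linear rnd d H M (percom_input n \<sigma>' id) T)"
      using assms(4) i by (intro drop_cot_seq_Linear_eq) auto
    moreover have "r i < T"
      using sol[OF _ is_perm_if_permutes[OF permutes_id] i] is_perm_if_permutes[OF assms(2)] by blast
    ultimately have "cot_seq Linear rnd d H M (percom_input n \<sigma> id) T ! (2 * n + r i)
        = cot_seq Linear rnd d H M (percom_input n \<sigma>' id) T ! (2 * n + r i)"
      by (intro nth_eq_if_drop_eq[where n = n]) auto
    then show "\<sigma> i = \<sigma>' i"
      using sol[OF _ is_perm_if_permutes[OF permutes_id] i] is_perm_if_permutes[OF assms(2)]
        is_perm_if_permutes[OF assms(3)] by simp
  qed
qed

section \<open>Fixed-point rounding and softmax\<close>

lemma fxp_even_eq_round:
  assumes "\<bar>round (x * 2 ^ s)\<bar> < 2 ^ (2 * s - 1)"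
  shows "fxp (2 * s) x = of_int (round (x * 2 ^ s)) / 2 ^ s"
  using assms unfolding fxp_def Let_def by (simp add: abs_less_iff max_def min_def)

lemma fxp_of_int:
  assumes "1 \<le> s" "\<bar>z\<bar> < 2 ^ (s - 1)"
  shows "fxp (2 * s) (of_int z) = of_int z"
proof -
  have round: "round (of_int z * 2 ^ s :: real) = z * 2 ^ s"
    by (metis of_int_mult of_int_numeral of_int_power round_of_int)
  have "\<bar>z * 2 ^ s\<bar> < 2 ^ (s - 1) * 2 ^ s"
    using assms(2) by (simp add: abs_mult)
  also have "\<dots> = 2 ^ (2 * s - 1)"
    using assms(1) by (simp flip: power_add)
  finally show ?thesis
    using fxp_even_eq_round[of "of_int z" s] by (simp add: round)
qed

lemma fxp_approx:
  assumes "1 \<le> s" "\<bar>x\<bar> \<le> 2 ^ (s - 1) - 1"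
  shows "\<bar>fxp (2 * s) x - x\<bar> \<le> 1 / 2 ^ (s + 1)"
proof -
  define r where "r = round (x * 2 ^ s)"
  have r: "\<bar>of_int r - x * 2 ^ s\<bar> \<le> 1 / 2"
    unfolding r_def by (rule of_int_round_abs_le)
  have "\<bar>x * 2 ^ s\<bar> \<le> (2 ^ (s - 1) - 1) * 2 ^ s"
    using assms(2) by (simp add: abs_mult)
  also have "\<dots> = 2 ^ (2 * s - 1) - 2 ^ s"
    using assms(1) by (simp add: algebra_simps flip: power_add)
  finally have "real_of_int \<bar>r\<bar> < 2 ^ (2 * s - 1)"
    using r one_le_power[of "2::real" s] by linarith
  then have "real_of_int \<bar>r\<bar> < real_of_int (2 ^ (2 * s - 1))"
    by simp
  then have "fxp (2 * s) x = of_int r / 2 ^ s"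
    unfolding r_def by (intro fxp_even_eq_round) (simp only: of_int_less_iff)
  then have "fxp (2 * s) x - x = (of_int r - x * 2 ^ s) / 2 ^ s"
    by (simp add: diff_divide_distrib)
  then have "\<bar>fxp (2 * s) x - x\<bar> = \<bar>of_int r - x * 2 ^ s\<bar> / 2 ^ s"
    by simp
  also have "\<dots> \<le> (1 / 2) / 2 ^ s"
    using r by (rule divide_right_mono) simp
  finally show ?thesis
    by simp
qed

lemma softmax_mean_approx:
  fixes sc v :: "'a \<Rightarrow> real" and V \<delta> :: real
  assumes "finite J" "j0 \<in> J"
    and score_gap: "\<And>j. j \<in> J \<Longrightarrow> j \<noteq> j0 \<Longrightarrow> sc j \<le> sc j0 - \<delta>"
    and spread: "\<And>j. j \<in> J \<Longrightarrow> \<bar>v j - v j0\<bar> \<le> V"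
  shows "\<bar>(\<Sum>j\<in>J. exp (sc j) * v j) / (\<Sum>j\<in>J. exp (sc j)) - v j0\<bar> \<le> real (card J) * V / exp \<delta>"
proof -
  define W where "W = (\<Sum>j\<in>J. exp (sc j))"
  have W: "exp (sc j0) \<le> W"
    unfolding W_def using assms(1,2) by (intro member_le_sum) simp_all
  then have "W > 0"
    by (meson exp_gt_zero order_less_le_trans)
  have "V \<ge> 0"
    using spread[OF assms(2)] by simp
  have summand: "\<bar>exp (sc j) * (v j - v j0)\<bar> \<le> exp (sc j0) / exp \<delta> * V" if "j \<in> J" for j
  proof (cases "j = j0")
    case False
    have "exp (sc j) \<le> exp (sc j0) / exp \<delta>"
      using score_gap[OF that False] by (simp add: exp_diff[symmetric])
    then have "exp (sc j) * \<bar>v j - v j0\<bar> \<le> exp (sc j0) / exp \<delta> * V"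
      using spread[OF that] by (rule mult_mono) simp_all
    then show ?thesis
      by (simp add: abs_mult)
  qed (use \<open>V \<ge> 0\<close> in simp)
  have "(\<Sum>j\<in>J. exp (sc j) * v j) / W - v j0 = (\<Sum>j\<in>J. exp (sc j) * (v j - v j0)) / W"
    using \<open>W > 0\<close> by (simp add: W_def field_simps sum_subtractf sum_distrib_left right_diff_distrib)
  also have "\<bar>\<dots>\<bar> \<le> (\<Sum>j\<in>J. exp (sc j0) / exp \<delta> * V) / W"
    unfolding abs_divide using \<open>W > 0\<close>
    by (intro divide_mono order_trans[OF sum_abs sum_mono] summand) simp_all
  also have "\<dots> = real (card J) * V / exp \<delta> * (exp (sc j0) / W)"
    by simp
  also have "\<dots> \<le> real (card J) * V / exp \<delta>"
    using W \<open>W > 0\<close> \<open>V \<ge> 0\<close> by (intro mult_left_le) simp_all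
  finally show ?thesis
    unfolding W_def .
qed

section \<open>A one-layer softmax transformer composing permutations\<close>

definition percom_prec :: "nat \<Rightarrow> nat" where
  "percom_prec n = 4 * ceillog2 n + 6"

abbreviation percom_rnd :: "nat \<Rightarrow> real \<Rightarrow> real" where
  "percom_rnd n \<equiv> fxp (2 * percom_prec n)"

lemma percom_rnd_of_int:
  assumes "\<bar>z\<bar> \<le> 16 * int n ^ 3"
  shows "percom_rnd n (of_int z) = of_int z"
proof (rule fxp_of_int)
  have "int n ^ 3 \<le> int n ^ 4"
    by (cases n) (simp_all add: power_increasing)
  also have "\<dots> \<le> (2 ^ ceillog2 n) ^ 4"
    using le_two_power_ceillog2[of n] by (intro power_mono) (simp_all flip: of_nat_le_iff)
  finally have "\<bar>z\<bar> \<le> 16 * (2 ^ ceillog2 n) ^ 4"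
    using assms by linarith
  moreover have "(0::int) < (2 ^ ceillog2 n) ^ 4"
    by simp
  ultimately have "\<bar>z\<bar> < 32 * (2 ^ ceillog2 n) ^ 4"
    by linarith
  also have "\<dots> = 2 ^ (percom_prec n - 1)"
    by (simp add: percom_prec_def power_add flip: power_mult)
  finally show "\<bar>z\<bar> < 2 ^ (percom_prec n - 1)" .
qed (simp add: percom_prec_def)

lemma percom_rnd_of_nat:
  assumes "k \<le> 16 * n ^ 3"
  shows "percom_rnd n (real k) = real k"
proof -
  have "int k \<le> int (16 * n ^ 3)"
    using assms by (simp only: of_nat_le_iff)
  then show ?thesis
    using percom_rnd_of_int[of "int k" n] by simp
qed

lemma percom_rnd_0_1: "percom_rnd n 0 = 0" "percom_rnd n 1 = 1"
  using fxp_of_int[of "percom_prec n" 0] fxp_of_int[of "percom_prec n" 1]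
  by (simp_all add: percom_prec_def)

lemma square_le_cube_nat: "(n::nat) ^ 2 \<le> n ^ 3"
  using power_increasing[of 2 3 n] by (cases "n = 0") simp_all

lemma percom_rnd_of_nat_le:
  assumes "k \<le> n"
  shows "percom_rnd n (real k) = real k" and "percom_rnd n (real k ^ 2) = real k ^ 2"
proof -
  have "k \<le> n ^ 2"
    using assms order_trans[OF _ le_square, of k n] by (simp add: power2_eq_square)
  moreover have "k ^ 2 \<le> n ^ 2"
    using assms by (simp add: power_mono)
  ultimately have "k \<le> 16 * n ^ 3" and "k ^ 2 \<le> 16 * n ^ 3"
    using square_le_cube_nat[of n] by linarith+
  then show "percom_rnd n (real k) = real k" and "percom_rnd n (real k ^ 2) = real k ^ 2"
    using percom_rnd_of_nat[of "k ^ 2" n] by (simp_all add: percom_rnd_of_nat)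
qed

definition percom_scale :: "nat \<Rightarrow> nat" where
  "percom_scale n = 8 * n ^ 2"

text \<open>Positions j < n carry the key (j+1, (j+1)^2) and the value \<open>\<sigma>(j+1)\<close>; a later position
  holding t carries the query (2 \<Lambda> t, -\<Lambda>) and the value 1.\<close>

definition percom_emb :: "nat \<Rightarrow> nat \<Rightarrow> nat \<Rightarrow> nat \<Rightarrow> real" where
  "percom_emb n tok pos c =
     (if pos < n then
        (if c = 0 then real (pos + 1) else if c = 1 then real ((pos + 1) ^ 2)
         else if c = 2 then real tok else 0)
      else (if c = 2 then 1 else if c = 3 then real tok else 0))"

definition percom_layer :: "nat \<Rightarrow> layer" where
  "percom_layer n =
     \<lparr>Qw = (\<lambda>h a b. if a = 0 \<and> b = 3 then real (2 * percom_scale n)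
                   else if a = 1 \<and> b = 2 then - real (percom_scale n) else 0),
      Kw = (\<lambda>h a b. if a = b \<and> a < 2 then 1 else 0),
      Vw = (\<lambda>h a b. if a = 0 \<and> b = 2 then 1 else 0),
      phi = (\<lambda>h x. x),
      mlp = (\<lambda>x y c. if c = 0 then of_int (round (y 0)) else 0)\<rparr>"

definition percom_model :: "nat \<Rightarrow> model" where
  "percom_model n = \<lparr>emb = percom_emb n, layers = [percom_layer n], dec = (\<lambda>v. nat (round (v 0)))\<rparr>"

lemma proj_4_1: "proj rnd 4 1 W x = (\<lambda>a. if a < 4 then rnd (\<Sum>b<4. rnd (W a b) * x b) else 0)"
  by (simp add: proj_def rvec_def mv_def fun_eq_iff)

lemma sum_lessThan_4: "(\<Sum>b<(4::nat). f b) = f 0 + f 1 + f 2 + (f 3 :: real)"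
  by (simp add: eval_nat_numeral)

lemma percom_rnd_weights:
  "percom_rnd n (Qw (percom_layer n) h a b) = Qw (percom_layer n) h a b"
  "percom_rnd n (Kw (percom_layer n) h a b) = Kw (percom_layer n) h a b"
  "percom_rnd n (Vw (percom_layer n) h a b) = Vw (percom_layer n) h a b"
proof -
  have le2: "2 * percom_scale n \<le> 16 * n ^ 3" and le1: "percom_scale n \<le> 16 * n ^ 3"
    using square_le_cube_nat[of n] by (simp_all add: percom_scale_def)
  from le1 have "int (percom_scale n) \<le> int (16 * n ^ 3)"
    by (simp only: of_nat_le_iff)
  then have "percom_rnd n (- real (percom_scale n)) = - real (percom_scale n)"
    using percom_rnd_of_int[of "- int (percom_scale n)" n] by simp
  with percom_rnd_of_nat[OF le2] show "percom_rnd n (Qw (percom_layer n) h a b) = Qw (percom_layer n) h a b"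
    using percom_rnd_0_1 by (simp add: percom_layer_def)
  show "percom_rnd n (Kw (percom_layer n) h a b) = Kw (percom_layer n) h a b"
    and "percom_rnd n (Vw (percom_layer n) h a b) = Vw (percom_layer n) h a b"
    using percom_rnd_0_1 by (simp_all add: percom_layer_def)
qed

lemma rvec_percom_emb:
  assumes "tok \<le> n"
  shows "rvec (percom_rnd n) 4 (percom_emb n tok pos) = percom_emb n tok pos"
proof -
  have "pos < n \<Longrightarrow> pos + 1 \<le> n"
    by simp
  then show ?thesis
    using assms percom_rnd_of_nat_le[of "pos + 1" n] percom_rnd_of_nat_le(1)[of tok n]
      percom_rnd_0_1
    by (auto simp: rvec_def percom_emb_def fun_eq_iff)
qed

lemma proj_percom_query:
  assumes "n \<le> pos" "t \<le> n"
  shows "proj (percom_rnd n) 4 1 (Qw (percom_layer n) h) (percom_emb n t pos)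
       = (\<lambda>a. if a = 0 then real (2 * percom_scale n * t) else if a = 1 then - real (percom_scale n) else 0)"
proof -
  have "2 * percom_scale n * t \<le> 16 * n ^ 3"
    using assms(2) by (simp add: percom_scale_def power3_eq_cube power2_eq_square)
  then have "percom_rnd n (real (2 * percom_scale n * t)) = real (2 * percom_scale n * t)"
    by (rule percom_rnd_of_nat)
  moreover have "percom_rnd n (- real (percom_scale n)) = - real (percom_scale n)"
    using percom_rnd_weights(1)[of n h 1 2] by (simp add: percom_layer_def)
  ultimately show ?thesis
    using assms percom_rnd_0_1 unfolding proj_4_1 percom_rnd_weights
    by (simp add: sum_lessThan_4 fun_eq_iff percom_layer_def percom_emb_def)
qed

lemma proj_percom_key:
  "proj (percom_rnd n) 4 1 (Kw (percom_layer n) h) (percom_emb n tok pos)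
     = (\<lambda>a. if pos < n \<and> a = 0 then real (pos + 1)
            else if pos < n \<and> a = 1 then real (pos + 1) ^ 2 else 0)"
proof -
  have "pos < n \<Longrightarrow> pos + 1 \<le> n"
    by simp
  then show ?thesis
    using percom_rnd_of_nat_le[of "pos + 1" n] percom_rnd_0_1
    unfolding proj_4_1 percom_rnd_weights
    by (auto simp: sum_lessThan_4 fun_eq_iff percom_layer_def percom_emb_def)
qed

lemma proj_percom_value:
  assumes "tok \<le> n"
  shows "proj (percom_rnd n) 4 1 (Vw (percom_layer n) h) (percom_emb n tok pos) 0
     = (if pos < n then real tok else 1)"
  using percom_rnd_of_nat_le(1)[OF assms] percom_rnd_0_1
  unfolding proj_4_1 percom_rnd_weights
  by (simp add: sum_lessThan_4 percom_layer_def percom_emb_def)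

definition percom_score :: "nat \<Rightarrow> nat \<Rightarrow> nat \<Rightarrow> real" where
  "percom_score n t j =
     (if j < n then real (percom_scale n) * (real t ^ 2 - (real t - real (j + 1)) ^ 2) else 0)"

lemma dotp_percom_query_key:
  assumes "n \<le> i" "t \<le> n"
  shows "dotp 4 (proj (percom_rnd n) 4 1 (Qw (percom_layer n) h) (percom_emb n t i))
      (proj (percom_rnd n) 4 1 (Kw (percom_layer n) h) (percom_emb n tok j)) = percom_score n t j"
  unfolding proj_percom_query[OF assms] proj_percom_key
  by (simp add: dotp_def sum_lessThan_4 percom_score_def power2_eq_square algebra_simps)

lemma percom_score_gap:
  assumes "t \<in> {1..n}" "j \<noteq> t - 1"
  shows "percom_score n t j \<le> percom_score n t (t - 1) - real (percom_scale n)"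
proof -
  have max: "percom_score n t (t - 1) = real (percom_scale n) * real t ^ 2"
    using assms(1) by (auto simp: percom_score_def of_nat_diff)
  show ?thesis
  proof (cases "j < n")
    case True
    have "t \<noteq> j + 1"
      using assms by auto
    then have "1 \<le> \<bar>real t - real (j + 1)\<bar>"
      by linarith
    then have "1 \<le> (real t - real (j + 1)) ^ 2"
      by (metis abs_le_square_iff abs_one power2_abs power_one)
    then have "real (percom_scale n) * 1 \<le> real (percom_scale n) * (real t - real (j + 1)) ^ 2"
      by (rule mult_left_mono) simp
    then show ?thesis
      using True unfolding max by (simp add: percom_score_def algebra_simps)
  next
    case False
    have "real (percom_scale n) * 1 \<le> real (percom_scale n) * real t ^ 2"
      using assms(1) by (intro mult_left_mono) simp_all
    then show ?thesis
      using False unfolding max by (simp add: percom_score_def)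
  qed
qed

lemma percom_attention_approx:
  fixes v :: "nat \<Rightarrow> real"
  assumes t: "t \<in> {1..n}" and i: "t - 1 \<le> i" "i < 2 * n"
    and v: "\<And>j. j \<le> i \<Longrightarrow> v j \<in> {1..real n}"
  shows "\<bar>(\<Sum>j\<le>i. exp (percom_score n t j) * v j) / (\<Sum>j\<le>i. exp (percom_score n t j)) - v (t - 1)\<bar>
    \<le> 1 / 4"
proof -
  have "\<bar>(\<Sum>j\<le>i. exp (percom_score n t j) * v j) / (\<Sum>j\<le>i. exp (percom_score n t j)) - v (t - 1)\<bar>
      \<le> real (card {..i}) * real n / exp (real (percom_scale n))"
  proof (rule softmax_mean_approx)
    show "percom_score n t j \<le> percom_score n t (t - 1) - real (percom_scale n)"
      if "j \<in> {..i}" "j \<noteq> t - 1" for j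
      using t that(2) by (rule percom_score_gap)
    show "\<bar>v j - v (t - 1)\<bar> \<le> real n" if "j \<in> {..i}" for j
      using v[of j] v[of "t - 1"] that i by auto
  qed (use i in auto)
  also have "\<dots> \<le> 2 * real n ^ 2 / real (percom_scale n)"
  proof (rule frac_le)
    show "real (card {..i}) * real n \<le> 2 * real n ^ 2"
      using i by (simp add: power2_eq_square mult_right_mono)
    show "0 < real (percom_scale n)"
      using t by (simp add: percom_scale_def)
    show "real (percom_scale n) \<le> exp (real (percom_scale n))"
      using exp_ge_add_one_self[of "real (percom_scale n)"] by linarith
  qed simp
  also have "\<dots> = 1 / 4"
    using t by (simp add: percom_scale_def)
  finally show ?thesis .
qed

lemma percom_prec_range: "real n + 2 \<le> 2 ^ (percom_prec n - 1)"
proof -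
  have "real n \<le> 2 ^ ceillog2 n"
    using le_two_power_ceillog2[of n] by (simp flip: of_nat_le_iff)
  also have "\<dots> \<le> 2 ^ (4 * ceillog2 n)"
    by (intro power_increasing) simp_all
  finally have "real n + 2 \<le> 32 * 2 ^ (4 * ceillog2 n)"
    using one_le_power[of "2::real" "4 * ceillog2 n"] by linarith
  then show ?thesis
    by (simp add: percom_prec_def power_add)
qed

lemma nth_in_if_set_subset: "set xs \<subseteq> A \<Longrightarrow> j < length xs \<Longrightarrow> xs ! j \<in> A"
  by (meson nth_mem subsetD)

lemma embed_tokens_percom_model:
  assumes "set toks \<subseteq> {1..n}"
  shows "embed_tokens (percom_rnd n) 4 1 (percom_model n) toks
    = map (\<lambda>j. percom_emb n (toks ! j) j) [0..<length toks]"
proof -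
  have "toks ! j \<le> n" if "j < length toks" for j
    using nth_in_if_set_subset[OF assms that] by simp
  then show ?thesis
    by (simp add: embed_tokens_def percom_model_def rvec_percom_emb)
qed

lemma percom_rnd_approx:
  assumes "\<bar>y\<bar> \<le> real n + 1"
  shows "\<bar>percom_rnd n y - y\<bar> \<le> 1 / 128"
proof -
  have "\<bar>percom_rnd n y - y\<bar> \<le> 1 / 2 ^ (percom_prec n + 1)"
    using assms percom_prec_range[of n] by (intro fxp_approx) (simp_all add: percom_prec_def)
  also have "\<dots> \<le> 1 / 2 ^ 7"
    by (intro divide_left_mono power_increasing) (simp_all add: percom_prec_def)
  finally show ?thesis
    by simp
qed

lemma head_out_percom_layer:
  assumes toks: "length toks = 2 * n" "set toks \<subseteq> {1..n}" and i: "n \<le> i" "i < 2 * n"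
  defines "xs \<equiv> map (\<lambda>j. percom_emb n (toks ! j) j) [0..<2 * n]"
  shows "head_out Full (percom_rnd n) 4 1 (percom_layer n) 0 xs i 0 = percom_rnd n
    ((\<Sum>j\<le>i. exp (percom_score n (toks ! i) j) * (if j < n then real (toks ! j) else 1))
      / (\<Sum>j\<le>i. exp (percom_score n (toks ! i) j)))"
proof -
  have "dotp 4 (proj (percom_rnd n) 4 1 (Qw (percom_layer n) 0) (xs ! i))
        (proj (percom_rnd n) 4 1 (Kw (percom_layer n) 0) (xs ! j)) = percom_score n (toks ! i) j"
    and "proj (percom_rnd n) 4 1 (Vw (percom_layer n) 0) (xs ! j) 0 = (if j < n then real (toks ! j) else 1)"
    if "j \<le> i" for j
  proof -
    have "xs ! i = percom_emb n (toks ! i) i" and "xs ! j = percom_emb n (toks ! j) j"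
      using that i by (simp_all add: xs_def)
    moreover have "toks ! i \<le> n" and "toks ! j \<le> n"
      using nth_in_if_set_subset[OF toks(2)] toks(1) that i by fastforce+
    ultimately show "dotp 4 (proj (percom_rnd n) 4 1 (Qw (percom_layer n) 0) (xs ! i))
        (proj (percom_rnd n) 4 1 (Kw (percom_layer n) 0) (xs ! j)) = percom_score n (toks ! i) j"
      and "proj (percom_rnd n) 4 1 (Vw (percom_layer n) 0) (xs ! j) 0 = (if j < n then real (toks ! j) else 1)"
      using dotp_percom_query_key[OF i(1)] proj_percom_value by simp_all
  qed
  then show ?thesis
    by (simp add: head_out_def rvec_def Let_def)
qed

lemma head_out_percom_layer_approx:
  assumes toks: "length toks = 2 * n" "set toks \<subseteq> {1..n}" and i: "n \<le> i" "i < 2 * n"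
  defines "xs \<equiv> map (\<lambda>j. percom_emb n (toks ! j) j) [0..<2 * n]"
  shows "\<bar>head_out Full (percom_rnd n) 4 1 (percom_layer n) 0 xs i 0 - real (toks ! (toks ! i - 1))\<bar> < 1 / 2"
proof -
  let ?t = "toks ! i"
  let ?v = "\<lambda>j. if j < n then real (toks ! j) else 1"
  define y where "y = (\<Sum>j\<le>i. exp (percom_score n ?t j) * ?v j) / (\<Sum>j\<le>i. exp (percom_score n ?t j))"
  have tok: "toks ! j \<in> {1..n}" if "j < 2 * n" for j
    using nth_in_if_set_subset[OF toks(2)] toks(1) that by simp
  then have t: "?t \<in> {1..n}"
    using i by simp
  have "\<bar>y - ?v (?t - 1)\<bar> \<le> 1 / 4"
    unfolding y_def using t i tok by (intro percom_attention_approx) force+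
  moreover have "?v (?t - 1) = real (toks ! (?t - 1))" and "toks ! (?t - 1) \<le> n"
    using t tok[of "?t - 1"] by auto
  ultimately have "\<bar>y - real (toks ! (?t - 1))\<bar> \<le> 1 / 4"
    by simp
  moreover have "\<bar>percom_rnd n y - y\<bar> \<le> 1 / 128"
    using calculation \<open>toks ! (?t - 1) \<le> n\<close> by (intro percom_rnd_approx) linarith
  ultimately show ?thesis
    unfolding xs_def head_out_percom_layer[OF toks i] y_def by linarith
qed

lemma model_out_percom_model:
  assumes toks: "length toks = 2 * n" "set toks \<subseteq> {1..n}" and i: "n \<le> i" "i < 2 * n"
  shows "model_out Full (percom_rnd n) 4 1 (percom_model n) toks i = toks ! (toks ! i - 1)"
proof -
  define a where "a = toks ! (toks ! i - 1)"
  define xs where "xs = map (\<lambda>j. percom_emb n (toks ! j) j) [0..<2 * n]"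
  have "toks ! i \<in> {1..n}"
    using nth_in_if_set_subset[OF toks(2)] toks(1) i by simp
  then have "a \<le> n"
    using nth_in_if_set_subset[OF toks(2), of "toks ! i - 1"] toks(1) unfolding a_def by auto
  have "round (head_out Full (percom_rnd n) 4 1 (percom_layer n) 0 xs i 0) = int a"
    using head_out_percom_layer_approx[OF toks i] by (intro round_unique') (simp add: a_def xs_def)
  then have "(apply_layer Full (percom_rnd n) 4 1 (percom_layer n) xs ! i) 0 = real a"
    using i percom_rnd_of_nat_le(1)[OF \<open>a \<le> n\<close>]
    by (simp add: apply_layer_def xs_def rvec_def concat_heads_def percom_layer_def)
  moreover have "hidden Full (percom_rnd n) 4 1 (percom_model n) toks
      = apply_layer Full (percom_rnd n) 4 1 (percom_layer n) xs"
    unfolding hidden_eq_fold_embed_tokens embed_tokens_percom_model[OF toks(2)]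
    using toks(1) by (simp add: xs_def percom_model_def)
  ultimately show ?thesis
    by (simp add: model_out_def percom_model_def a_def)
qed

lemma nth_percom_input:
  "j < n \<Longrightarrow> percom_input n \<sigma> \<tau> ! j = \<sigma> (j + 1)"
  "n \<le> j \<Longrightarrow> j < 2 * n \<Longrightarrow> percom_input n \<sigma> \<tau> ! j = \<tau> (j - n + 1)"
  by (simp_all add: percom_input_def nth_append del: upt_Suc)

lemma set_percom_input:
  assumes "is_perm n \<sigma>" "is_perm n \<tau>"
  shows "set (percom_input n \<sigma> \<tau>) \<subseteq> {1..n}"
proof -
  have "\<sigma> ` {1..n} = {1..n}" and "\<tau> ` {1..n} = {1..n}"
    using assms by (simp_all add: is_perm_def bij_betw_imp_surj_on)
  then show ?thesis
    by (simp add: percom_input_def atLeastLessThanSuc_atLeastAtMost del: upt_Suc)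
qed

lemma solves_percom_model: "solves Full (percom_rnd n) 4 1 n (percom_model n)"
  unfolding solves_def
proof (intro allI impI ballI)
  fix \<sigma> \<tau> i
  assume perms: "is_perm n \<sigma>" "is_perm n \<tau>" and i: "i \<in> {1..n}"
  have "\<tau> i \<in> {1..n}"
    using perms(2) i unfolding is_perm_def by (rule bij_betw_apply)
  then have "percom_input n \<sigma> \<tau> ! (\<tau> i - 1) = \<sigma> (\<tau> i)"
    using nth_percom_input(1)[of "\<tau> i - 1" n \<sigma> \<tau>] by auto
  moreover have "percom_input n \<sigma> \<tau> ! (n + i - 1) = \<tau> i"
    using nth_percom_input(2)[of n "n + i - 1" \<sigma> \<tau>] i by auto
  ultimately have "percom_input n \<sigma> \<tau> ! (percom_input n \<sigma> \<tau> ! (n + i - 1) - 1) = \<sigma> (\<tau> i)"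
    by simp
  then show "model_out Full (percom_rnd n) 4 1 (percom_model n) (percom_input n \<sigma> \<tau>) (n + i - 1) = \<sigma> (\<tau> i)"
    using i set_percom_input[OF perms] by (subst model_out_percom_model) auto
qed

lemma percom_model_size:
  assumes "2 \<le> n"
  shows "real (1 * 4 * (2 * percom_prec n)) \<le> 112 * log 2 (real n)"
proof -
  have "1 \<le> log 2 (real n)"
    using assms by simp
  moreover have "real (1 * 4 * (2 * percom_prec n)) = 32 * real (ceillog2 n) + 48"
    by (simp add: percom_prec_def)
  ultimately show ?thesis
    using ceillog2_less_log[of n] assms by linarith
qed

theorem theoremA6:
  shows
   "(\<forall>(rnd::real \<Rightarrow> real) p M H d n.
       pbit p rnd \<and> real (length (layers M) * H * d * (d + 1) * p) < log 2 (fact n)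
       \<longrightarrow> \<not> solves Linear rnd d H n M)
  \<and> (\<exists>(c::real) (k::nat). \<forall>n\<ge>2. \<exists>M H d p.
       length (layers M) = 1 \<and> solves Full (fxp p) d H n M \<and>
       real (H * d * p) \<le> c * (log 2 (real n)) ^ k)
  \<and> (\<forall>(rnd::real \<Rightarrow> real) p M H d n.
       pbit p rnd \<and> real (length (layers M) * H * d * (d + 1) * p) < log 2 (fact n)
       \<longrightarrow> \<not> solves_cot Linear rnd d H n M)"
proof -
  have lower: "\<not> solves Linear rnd d H n M \<and> \<not> solves_cot Linear rnd d H n M"
    if prec: "pbit p rnd" and budget: "real (length (layers M) * H * d * (d + 1) * p) < log 2 (fact n)"
    for rnd :: "real \<Rightarrow> real" and p M H d n
  proof -
    obtain \<sigma> \<sigma>' where "\<sigma> permutes {1..n}" "\<sigma>' permutes {1..n}" "\<sigma> \<noteq> \<sigma>'"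
      "lin_memory rnd d H M (map \<sigma> [1..<Suc n]) = lin_memory rnd d H M (map \<sigma>' [1..<Suc n])"
      using lin_memory_collision[OF prec budget] by blast
    then show ?thesis
      using solves_Linear_lin_memory_eqD solves_cot_Linear_lin_memory_eqD by blast
  qed
  have upper: "\<exists>M H d p. length (layers M) = 1 \<and> solves Full (fxp p) d H n M \<and>
      real (H * d * p) \<le> 112 * log 2 (real n) ^ 1" if "2 \<le> n" for n
    using solves_percom_model[of n] percom_model_size[OF that]
    by (intro exI[of _ "percom_model n"] exI[of _ 1] exI[of _ 4] exI[of _ "2 * percom_prec n"])
      (simp add: percom_model_def)
  show ?thesis
    using lower upper by blast
qed

end
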